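(* Let $K$ be a field of characteristic $0$, let $W\le S_d$ be a permutation group and $\chi$ a one-dimensional character of $W$. For $n\in\mathbb N_0$ let $g_n(\chi;x_0,\dots,x_n)=\sum_{j\in J(n,d,\chi)}x_{j_1}\cdots x_{j_d}$ and let $g(\chi;x_0,x_1,x_2,\dots)=\sum_{j\in J(\mathbb N_0^d,\chi)}x_{j_1}\cdots x_{j_d}$ (a formal infinite sum of monomials). Then each $g_n$ is a symmetric polynomial in $x_0,\dots,x_n$, one has $g(\chi;x_0,\dots,x_n,0,0,\dots)=g_n(\chi;x_0,\dots,x_n)$ for all $n$, so that the sequence $(g_n)_{n\ge0}$ determines a symmetric function in the countably many variables $x_0,x_1,x_2,\dots$; this symmetric function coincides both with the characteristic of the polynomial functor $[\chi]^d(-)$ and with $g(\chi;x_0,x_1,x_2,\dots)$.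
   Context: A one-dimensional character of $W$ is a homomorphism $W\to K^\times$. For a $K$-linear space $E$, $W$ acts on $\otimes^d E$ by $\sigma(x_1\otimes\cdots\otimes x_d)=x_{\sigma^{-1}(1)}\otimes\cdots\otimes x_{\sigma^{-1}(d)}$; ${}_\chi(\otimes^dE)$ is the subspace spanned by all $\chi^{-1}(\sigma)z-\sigma z$ ($\sigma\in W$, $z\in\otimes^dE$); the semi-symmetric power is $[\chi]^d(E)=\otimes^dE/{}_\chi(\otimes^dE)$, with $x_1\chi\cdots\chi x_d$ the image of $x_1\otimes\cdots\otimes x_d$. For a linear map $l\colon E\to E'$, $[\chi]^d(l)$ is the linear map with $x_1\chi\cdots\chi x_d\mapsto l(x_1)\chi\cdots\chi l(x_d)$; this makes $[\chi]^d(-)$ a polynomial functor homogeneous of degree $d$ on finite-dimensional $K$-linear spaces. Index sets: for a well-ordered set $L$, $W$ acts on $L^d$ by $\sigma(i_1,\dots,i_d)=(i_{\sigma^{-1}(1)},\dots,i_{\sigma^{-1}(d)})$; $J(L^d,\chi)$ is the set of those elements $j\in L^d$ which are lexicographically minimal in their $W$-orbit and satisfy $\chi(\sigma)=1$ for all $\sigma$ in the stabilizer $W_j$. $J(n,d,\chi)=J([0,n]^d,\chi)$ with $[0,n]=\{0,1,\dots,n\}$, and $\mathbb N_0=\{0,1,2,\dots\}$. The characteristic of a polynomial functor $F$ homogeneous of degree $d$ is the symmetric function whose specialization $x_{n+1}=x_{n+2}=\cdots=0$ is, for each $n$, the trace of $F(\mathrm{diag}(x_0,\dots,x_n))$ acting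 on $F(K^{n+1})$, regarded as a polynomial in $x_0,\dots,x_n$. *)

theory Defs
  imports "HOL-Combinatorics.Permutations" "HOL-Library.Multiset"
begin

(* Positions are 0-based: S_d acts on {0..<d}; an element of L^d is a list of length d. *)

definition tuples :: "nat set \<Rightarrow> nat \<Rightarrow> nat list set" where
  "tuples L d = {j. length j = d \<and> set j \<subseteq> L}"

definition perm_act :: "nat \<Rightarrow> (nat \<Rightarrow> nat) \<Rightarrow> nat list \<Rightarrow> nat list" where
  "perm_act d \<sigma> j = map (\<lambda>i. j ! (inv \<sigma> i)) [0..<d]"

definition is_perm_group :: "nat \<Rightarrow> (nat \<Rightarrow> nat) set \<Rightarrow> bool" where
  "is_perm_group d W \<longleftrightarrow> W \<subseteq> {\<sigma>. \<sigma> permutes {0..<d}} \<and> id \<in> W \<and>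
     (\<forall>\<sigma>\<in>W. \<forall>\<tau>\<in>W. \<sigma> \<circ> \<tau> \<in> W) \<and> (\<forall>\<sigma>\<in>W. inv \<sigma> \<in> W)"

definition is_lin_char :: "(nat \<Rightarrow> nat) set \<Rightarrow> ((nat \<Rightarrow> nat) \<Rightarrow> 'a::field) \<Rightarrow> bool" where
  "is_lin_char W \<chi> \<longleftrightarrow> (\<forall>\<sigma>\<in>W. \<chi> \<sigma> \<noteq> 0) \<and> (\<forall>\<sigma>\<in>W. \<forall>\<tau>\<in>W. \<chi> (\<sigma> \<circ> \<tau>) = \<chi> \<sigma> * \<chi> \<tau>)"

(* J(L^d, chi): lexicographically minimal in the W-orbit, chi trivial on the stabilizer *)
definition Jset :: "nat \<Rightarrow> (nat \<Rightarrow> nat) set \<Rightarrow> ((nat \<Rightarrow> nat) \<Rightarrow> 'a::field) \<Rightarrow> nat set \<Rightarrow> nat list set" where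
  "Jset d W \<chi> L = {j \<in> tuples L d.
      (\<forall>\<sigma>\<in>W. perm_act d \<sigma> j = j \<or> (j, perm_act d \<sigma> j) \<in> lexord {(a, b). a < b}) \<and>
      (\<forall>\<sigma>\<in>W. perm_act d \<sigma> j = j \<longrightarrow> \<chi> \<sigma> = 1)}"

definition g_poly :: "nat \<Rightarrow> (nat \<Rightarrow> nat) set \<Rightarrow> ((nat \<Rightarrow> nat) \<Rightarrow> 'a::field) \<Rightarrow> nat \<Rightarrow> (nat \<Rightarrow> 'a) \<Rightarrow> 'a" where
  "g_poly d W \<chi> n x = (\<Sum>j\<in>Jset d W \<chi> {0..n}. \<Prod>i<d. x (j ! i))"

(* The formal series g(chi; x_0, x_1, ...), represented by its coefficients:
   coefficient of the monomial prod_k x_k^(count m k) *)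
definition g_coeff :: "nat \<Rightarrow> (nat \<Rightarrow> nat) set \<Rightarrow> ((nat \<Rightarrow> nat) \<Rightarrow> 'a::field) \<Rightarrow> nat multiset \<Rightarrow> nat" where
  "g_coeff d W \<chi> m = card {j \<in> Jset d W \<chi> UNIV. mset j = m}"

(* specialization x_{n+1} = x_{n+2} = ... = 0 of the formal series *)
definition g_spec :: "nat \<Rightarrow> (nat \<Rightarrow> nat) set \<Rightarrow> ((nat \<Rightarrow> nat) \<Rightarrow> 'a::field) \<Rightarrow> nat \<Rightarrow> (nat \<Rightarrow> 'a) \<Rightarrow> 'a" where
  "g_spec d W \<chi> n x = (\<Sum>m\<in>{m. size m = d \<and> set_mset m \<subseteq> {0..n}}.
      of_nat (g_coeff d W \<chi> m) * (\<Prod>k\<in>set_mset m. x k ^ count m k))"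

(* ---- tensor power of K^(n+1): functions on tuples with basis e_j, j \<in> [0,n]^d ---- *)
definition tensor_space :: "nat \<Rightarrow> nat \<Rightarrow> (nat list \<Rightarrow> 'a::field) set" where
  "tensor_space n d = {z. \<forall>j. z j \<noteq> 0 \<longrightarrow> j \<in> tuples {0..n} d}"

(* action of sigma on the tensor power: sigma(e_j) = e_(sigma j) *)
definition perm_tensor :: "nat \<Rightarrow> (nat \<Rightarrow> nat) \<Rightarrow> (nat list \<Rightarrow> 'a::field) \<Rightarrow> nat list \<Rightarrow> 'a" where
  "perm_tensor d \<sigma> z = (\<lambda>k. if length k = d then z (perm_act d (inv \<sigma>) k) else 0)"

definition lin_span :: "(nat list \<Rightarrow> 'a::field) set \<Rightarrow> (nat list \<Rightarrow> 'a) set" where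
  "lin_span S = {v. \<exists>F a. finite F \<and> F \<subseteq> S \<and> v = (\<lambda>k. \<Sum>s\<in>F. a s * s k)}"

definition chi_sub :: "nat \<Rightarrow> nat \<Rightarrow> (nat \<Rightarrow> nat) set \<Rightarrow> ((nat \<Rightarrow> nat) \<Rightarrow> 'a::field) \<Rightarrow> (nat list \<Rightarrow> 'a) set" where
  "chi_sub n d W \<chi> = lin_span {(\<lambda>k. inverse (\<chi> \<sigma>) * z k - perm_tensor d \<sigma> z k) | \<sigma> z.
       \<sigma> \<in> W \<and> z \<in> tensor_space n d}"

(* tensor^d l for the linear map l: K^(n+1) \<rightarrow> K^(n+1) with matrix A, l(e_b) = sum_a A a b e_a *)
definition tensor_map :: "nat \<Rightarrow> nat \<Rightarrow> (nat \<Rightarrow> nat \<Rightarrow> 'a::field) \<Rightarrow> (nat list \<Rightarrow> 'a) \<Rightarrow> nat list \<Rightarrow> 'a" where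
  "tensor_map n d A z = (\<lambda>j. if j \<in> tuples {0..n} d
      then (\<Sum>k\<in>tuples {0..n} d. (\<Prod>i<d. A (j ! i) (k ! i)) * z k) else 0)"

definition diag_mat :: "(nat \<Rightarrow> 'a::field) \<Rightarrow> nat \<Rightarrow> nat \<Rightarrow> 'a" where
  "diag_mat x a b = (if a = b then x a else 0)"

definition indep_mod :: "(nat list \<Rightarrow> 'a::field) set \<Rightarrow> (nat list \<Rightarrow> 'a) set \<Rightarrow> bool" where
  "indep_mod U B \<longleftrightarrow> (\<forall>a. (\<lambda>k. \<Sum>b\<in>B. a b * b k) \<in> U \<longrightarrow> (\<forall>b\<in>B. a b = 0))"

(* trace of the map induced by f on the quotient V/U, computed in a basis of V/U
   given by representatives B (the images of B form a basis of V/U) *)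
definition quot_trace :: "(nat list \<Rightarrow> 'a::field) set \<Rightarrow> (nat list \<Rightarrow> 'a) set \<Rightarrow>
    ((nat list \<Rightarrow> 'a) \<Rightarrow> (nat list \<Rightarrow> 'a)) \<Rightarrow> 'a" where
  "quot_trace V U f = (THE t. \<exists>B c. finite B \<and> B \<subseteq> V \<and> indep_mod U B \<and>
      (\<forall>v\<in>V. \<exists>u\<in>U. \<exists>a. v = (\<lambda>k. u k + (\<Sum>b\<in>B. a b * b k))) \<and>
      (\<forall>b\<in>B. (\<lambda>k. f b k - (\<Sum>b'\<in>B. c b b' * b' k)) \<in> U) \<and>
      t = (\<Sum>b\<in>B. c b b))"

(* trace of [chi]^d(diag(x_0,...,x_n)) on [chi]^d(K^(n+1)) *)
definition char_trace :: "nat \<Rightarrow> (nat \<Rightarrow> nat) set \<Rightarrow> ((nat \<Rightarrow> nat) \<Rightarrow> 'a::field) \<Rightarrow> nat \<Rightarrow> (nat \<Rightarrow> 'a) \<Rightarrow> 'a" where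
  "char_trace d W \<chi> n x = quot_trace (tensor_space n d) (chi_sub n d W \<chi>) (tensor_map n d (diag_mat x))"

end

theory Submission
  imports Defs "HOL-Library.List_Lexorder"
begin

(*
  W acts on [0,n]^d by permuting positions, the monomial x_{j_1} ... x_{j_d} is constant on
  W-orbits, and J(n,d,\<chi>) consists of the lexicographic minima of exactly those orbits on
  whose stabilisers \<chi> is trivial. Renaming the variables by a permutation \<pi> permutes the
  orbits and preserves their stabilisers, which gives the symmetry of g_n; grouping J by the
  multiset of entries gives the specialisation of g.

  For the trace, every unit tensor e_k is an eigenvector of diag(x)^{\<otimes>d}. Modulo the
  \<chi>-relations, e_k is a nonzero multiple of e_j for j the minimum of its orbit, and e_j is itself
  a relation when \<chi> is nontrivial on the stabiliser of j. The \<chi>-twisted orbit sums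
  z \<mapsto> |W_j|^-1 \<Sum>_\<tau> \<chi>(\<tau>)^-1 z(\<tau> j) (this is where characteristic 0 enters) vanish on
  the relations and are dual to the e_j with j \<in> J. Hence the classes of these e_j form an
  eigenbasis of [\<chi>]^d(diag x), and its trace is \<Sum>_{j \<in> J} x_{j_1} ... x_{j_d}.
*)

section \<open>Orbits of a permutation group on tuples\<close>

lemma length_perm_act [simp]: "length (perm_act d \<sigma> j) = d"
  by (simp add: perm_act_def)

lemma nth_perm_act: "i < d \<Longrightarrow> perm_act d \<sigma> j ! i = j ! inv \<sigma> i"
  by (simp add: perm_act_def)

lemma perm_act_id [simp]: "length j = d \<Longrightarrow> perm_act d id j = j"
  by (rule nth_equalityI) (simp_all add: nth_perm_act)

lemma inv_permutes_lessThan: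
  fixes d :: nat
  assumes "\<sigma> permutes {0..<d}" and "i < d"
  shows "inv \<sigma> i < d"
  using permutes_in_image[OF permutes_inv[OF assms(1)], of i] assms(2) by simp

lemma perm_act_comp:
  assumes "\<sigma> permutes {0..<d}" and "\<tau> permutes {0..<d}"
  shows "perm_act d \<sigma> (perm_act d \<tau> j) = perm_act d (\<sigma> \<circ> \<tau>) j"
proof (rule nth_equalityI)
  fix i assume "i < length (perm_act d \<sigma> (perm_act d \<tau> j))"
  then have i: "i < d" by simp
  have "inv (\<sigma> \<circ> \<tau>) = inv \<tau> \<circ> inv \<sigma>"
    using o_inv_distrib permutes_bij assms by blast
  then show "perm_act d \<sigma> (perm_act d \<tau> j) ! i = perm_act d (\<sigma> \<circ> \<tau>) j ! i"
    using i inv_permutes_lessThan[OF assms(1) i] by (simp add: nth_perm_act)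
qed simp

lemma set_perm_act:
  assumes "\<sigma> permutes {0..<d}" and "length j = d"
  shows "set (perm_act d \<sigma> j) = set j"
proof -
  have "set (perm_act d \<sigma> j) = (\<lambda>i. j ! i) ` (inv \<sigma> ` {0..<d})"
    by (auto simp add: perm_act_def)
  also have "inv \<sigma> ` {0..<d} = {0..<d}"
    using permutes_inv[OF assms(1)] permutes_image by blast
  finally show ?thesis using assms(2) by (auto simp: set_conv_nth)
qed

lemma map_perm_act:
  assumes "\<sigma> permutes {0..<d}" and "length j = d"
  shows "map \<pi> (perm_act d \<sigma> j) = perm_act d \<sigma> (map \<pi> j)"
proof (rule nth_equalityI)
  fix i assume "i < length (map \<pi> (perm_act d \<sigma> j))"
  then have i: "i < d" by simp
  then show "map \<pi> (perm_act d \<sigma> j) ! i = perm_act d \<sigma> (map \<pi> j) ! i"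
    using inv_permutes_lessThan[OF assms(1) i] assms(2) by (simp add: nth_perm_act)
qed simp

lemma finite_tuples: "finite L \<Longrightarrow> finite (tuples L d)"
  unfolding tuples_def using finite_lists_length_eq by (simp add: conj_commute)

definition monom :: "nat \<Rightarrow> (nat \<Rightarrow> 'a::comm_monoid_mult) \<Rightarrow> nat list \<Rightarrow> 'a" where
  "monom d x j = (\<Prod>i<d. x (j ! i))"

lemma monom_perm_act:
  assumes "\<sigma> permutes {0..<d}"
  shows "monom d x (perm_act d \<sigma> j) = monom d x j"
proof -
  have "bij_betw (inv \<sigma>) {..<d} {..<d}"
    using permutes_inv[OF assms] permutes_imp_bij atLeast0LessThan by metis
  then have "(\<Prod>i<d. x (j ! inv \<sigma> i)) = (\<Prod>i<d. x (j ! i))"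
    using prod.reindex_bij_betw[of "inv \<sigma>" "{..<d}" "{..<d}" "\<lambda>i. x (j ! i)"] by simp
  then show ?thesis
    unfolding monom_def by (simp add: nth_perm_act)
qed

lemma monom_map: "length j = d \<Longrightarrow> monom d x (map \<pi> j) = monom d (x \<circ> \<pi>) j"
  unfolding monom_def by simp

lemma monom_eq_prod_count:
  assumes "length j = d"
  shows "monom d x j = (\<Prod>k\<in>set_mset (mset j). x k ^ count (mset j) k)"
proof -
  have "(\<Prod>k\<in>set_mset (mset j). x k ^ count (mset j) k) = prod_mset (image_mset x (mset j))"
    by (rule image_prod_mset_multiplicity[symmetric])
  also have "\<dots> = prod_list (map x j)"
    by (simp add: prod_mset_prod_list[symmetric])
  also have "\<dots> = monom d x j"
    unfolding monom_def using assms by (simp add: prod.list_conv_set_nth atLeast0LessThan)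
  finally show ?thesis by simp
qed

locale perm_group_char =
  fixes d :: nat and W :: "(nat \<Rightarrow> nat) set" and \<chi> :: "(nat \<Rightarrow> nat) \<Rightarrow> 'a::field"
  assumes perm_group: "is_perm_group d W" and lin_char: "is_lin_char W \<chi>"
begin

lemma W_permutes: "\<sigma> \<in> W \<Longrightarrow> \<sigma> permutes {0..<d}"
  using perm_group by (auto simp: is_perm_group_def)

lemma id_in_W [simp]: "id \<in> W"
  using perm_group by (auto simp: is_perm_group_def)

lemma comp_in_W: "\<sigma> \<in> W \<Longrightarrow> \<tau> \<in> W \<Longrightarrow> \<sigma> \<circ> \<tau> \<in> W"
  using perm_group by (auto simp: is_perm_group_def)

lemma inv_in_W: "\<sigma> \<in> W \<Longrightarrow> inv \<sigma> \<in> W"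
  using perm_group by (auto simp: is_perm_group_def)

lemma finite_W: "finite W"
  using perm_group finite_permutations[of "{0..<d}"]
  by (auto simp: is_perm_group_def intro: finite_subset)

lemma inv_comp_cancel: "\<sigma> \<in> W \<Longrightarrow> inv \<sigma> \<circ> \<sigma> = id"
  using W_permutes permutes_inv_o(2) by blast

lemma comp_inv_cancel: "\<sigma> \<in> W \<Longrightarrow> \<sigma> \<circ> inv \<sigma> = id"
  using W_permutes permutes_inv_o(1) by blast

lemma chi_nonzero: "\<sigma> \<in> W \<Longrightarrow> \<chi> \<sigma> \<noteq> 0"
  using lin_char by (auto simp: is_lin_char_def)

lemma chi_comp: "\<sigma> \<in> W \<Longrightarrow> \<tau> \<in> W \<Longrightarrow> \<chi> (\<sigma> \<circ> \<tau>) = \<chi> \<sigma> * \<chi> \<tau>"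
  using lin_char by (auto simp: is_lin_char_def)

lemma chi_inv: "\<sigma> \<in> W \<Longrightarrow> \<chi> (inv \<sigma>) = inverse (\<chi> \<sigma>)"
proof -
  assume \<sigma>: "\<sigma> \<in> W"
  have "\<chi> id = \<chi> id * \<chi> id" using chi_comp[of id id] by simp
  then have "\<chi> id = 1" using chi_nonzero[of id] by simp
  then have "\<chi> (inv \<sigma>) * \<chi> \<sigma> = 1"
    using chi_comp[OF inv_in_W[OF \<sigma>] \<sigma>] inv_comp_cancel[OF \<sigma>] by simp
  then show ?thesis using chi_nonzero[OF \<sigma>] by (simp add: field_simps)
qed

lemma perm_act_perm_act:
  "\<sigma> \<in> W \<Longrightarrow> \<tau> \<in> W \<Longrightarrow> perm_act d \<sigma> (perm_act d \<tau> j) = perm_act d (\<sigma> \<circ> \<tau>) j"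
  using perm_act_comp W_permutes by blast

lemma perm_act_inv_perm_act:
  "\<sigma> \<in> W \<Longrightarrow> length j = d \<Longrightarrow> perm_act d (inv \<sigma>) (perm_act d \<sigma> j) = j"
  using perm_act_perm_act[OF inv_in_W] inv_comp_cancel by simp

lemma perm_act_perm_act_inv:
  "\<sigma> \<in> W \<Longrightarrow> length j = d \<Longrightarrow> perm_act d \<sigma> (perm_act d (inv \<sigma>) j) = j"
  using perm_act_perm_act[OF _ inv_in_W] comp_inv_cancel by simp

lemma perm_act_in_tuples_iff:
  "\<sigma> \<in> W \<Longrightarrow> length j = d \<Longrightarrow> perm_act d \<sigma> j \<in> tuples L d \<longleftrightarrow> j \<in> tuples L d"
  using set_perm_act[OF W_permutes] by (simp add: tuples_def)

definition W_orbit :: "nat list \<Rightarrow> nat list set" where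
  "W_orbit j = (\<lambda>\<sigma>. perm_act d \<sigma> j) ` W"

definition W_stab :: "nat list \<Rightarrow> (nat \<Rightarrow> nat) set" where
  "W_stab j = {\<sigma> \<in> W. perm_act d \<sigma> j = j}"

definition chi_trivial_on_stab :: "nat list \<Rightarrow> bool" where
  "chi_trivial_on_stab j \<longleftrightarrow> (\<forall>\<sigma>\<in>W_stab j. \<chi> \<sigma> = 1)"

definition orbit_min :: "nat list \<Rightarrow> nat list" where
  "orbit_min j = Min (W_orbit j)"

lemma finite_W_orbit: "finite (W_orbit j)"
  using finite_W by (simp add: W_orbit_def)

lemma self_in_W_orbit: "length j = d \<Longrightarrow> j \<in> W_orbit j"
  unfolding W_orbit_def using id_in_W perm_act_id by (metis image_eqI)

lemma perm_act_in_W_orbit: "\<sigma> \<in> W \<Longrightarrow> perm_act d \<sigma> j \<in> W_orbit j"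
  unfolding W_orbit_def by blast

lemma W_orbit_perm_act:
  assumes \<tau>: "\<tau> \<in> W" and j: "length j = d"
  shows "W_orbit (perm_act d \<tau> j) = W_orbit j"
proof
  show "W_orbit (perm_act d \<tau> j) \<subseteq> W_orbit j"
    unfolding W_orbit_def using perm_act_perm_act[OF _ \<tau>] comp_in_W[OF _ \<tau>] by auto
  show "W_orbit j \<subseteq> W_orbit (perm_act d \<tau> j)"
  proof
    fix k assume "k \<in> W_orbit j"
    then obtain \<sigma> where \<sigma>: "\<sigma> \<in> W" and k: "k = perm_act d \<sigma> j" by (auto simp: W_orbit_def)
    have "perm_act d (\<sigma> \<circ> inv \<tau>) (perm_act d \<tau> j) = perm_act d \<sigma> (perm_act d (inv \<tau>) (perm_act d \<tau> j))"
      by (simp add: perm_act_perm_act[OF \<sigma> inv_in_W[OF \<tau>]])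
    then have "k = perm_act d (\<sigma> \<circ> inv \<tau>) (perm_act d \<tau> j)"
      using k perm_act_inv_perm_act[OF \<tau> j] by simp
    then show "k \<in> W_orbit (perm_act d \<tau> j)"
      using perm_act_in_W_orbit[OF comp_in_W[OF \<sigma> inv_in_W[OF \<tau>]]] by simp
  qed
qed

lemma W_orbit_eq:
  assumes "k \<in> W_orbit j" and "length j = d"
  shows "W_orbit k = W_orbit j"
proof -
  obtain \<tau> where "\<tau> \<in> W" and "k = perm_act d \<tau> j"
    using assms(1) unfolding W_orbit_def by blast
  then show ?thesis using W_orbit_perm_act assms(2) by simp
qed

lemma orbit_min_in_W_orbit: "length j = d \<Longrightarrow> orbit_min j \<in> W_orbit j"
  unfolding orbit_min_def using finite_W_orbit self_in_W_orbit by (metis Min_in empty_iff)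

lemma orbit_min_le: "k \<in> W_orbit j \<Longrightarrow> orbit_min j \<le> k"
  unfolding orbit_min_def using finite_W_orbit by simp

lemma orbit_min_eq: "k \<in> W_orbit j \<Longrightarrow> length j = d \<Longrightarrow> orbit_min k = orbit_min j"
  unfolding orbit_min_def using W_orbit_eq by simp

lemma orbit_min_idem: "length j = d \<Longrightarrow> orbit_min (orbit_min j) = orbit_min j"
  using orbit_min_eq[OF orbit_min_in_W_orbit] by blast

lemma W_orbit_if_orbit_min_eq:
  assumes "length j = d" and "length k = d" and "orbit_min j = orbit_min k"
  shows "j \<in> W_orbit k"
  using assms W_orbit_eq[OF orbit_min_in_W_orbit] self_in_W_orbit by metis

lemma chi_trivial_on_stab_perm_act:
  assumes \<tau>: "\<tau> \<in> W" and j: "length j = d" and triv: "chi_trivial_on_stab j"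
  shows "chi_trivial_on_stab (perm_act d \<tau> j)"
  unfolding chi_trivial_on_stab_def
proof
  fix \<sigma> assume "\<sigma> \<in> W_stab (perm_act d \<tau> j)"
  then have \<sigma>: "\<sigma> \<in> W" and fix_\<sigma>: "perm_act d \<sigma> (perm_act d \<tau> j) = perm_act d \<tau> j"
    by (auto simp: W_stab_def)
  \<comment> \<open>the stabilisers of \<open>j\<close> and \<open>\<tau> j\<close> are conjugate, and \<open>\<chi>\<close> is a class function\<close>
  have conj: "inv \<tau> \<circ> \<sigma> \<circ> \<tau> \<in> W" using comp_in_W inv_in_W \<sigma> \<tau> by blast
  have "perm_act d (inv \<tau> \<circ> \<sigma> \<circ> \<tau>) j = perm_act d (inv \<tau>) (perm_act d \<sigma> (perm_act d \<tau> j))"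
    using \<sigma> \<tau> by (simp add: perm_act_perm_act comp_in_W inv_in_W comp_assoc)
  also have "\<dots> = j" using fix_\<sigma> perm_act_inv_perm_act \<tau> j by simp
  finally have "\<chi> (inv \<tau> \<circ> \<sigma> \<circ> \<tau>) = 1" using triv conj by (auto simp: chi_trivial_on_stab_def W_stab_def)
  moreover have "\<chi> (inv \<tau> \<circ> \<sigma> \<circ> \<tau>) = \<chi> \<sigma>"
    using \<sigma> \<tau> chi_nonzero[OF \<tau>] by (simp add: chi_comp chi_inv comp_in_W inv_in_W)
  ultimately show "\<chi> \<sigma> = 1" by simp
qed

lemma chi_trivial_on_stab_W_orbit:
  assumes "k \<in> W_orbit j" and j: "length j = d"
  shows "chi_trivial_on_stab k \<longleftrightarrow> chi_trivial_on_stab j"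
proof -
  obtain \<tau> where \<tau>: "\<tau> \<in> W" and k: "k = perm_act d \<tau> j" using assms(1) by (auto simp: W_orbit_def)
  have "perm_act d (inv \<tau>) k = j" using k perm_act_inv_perm_act[OF \<tau> j] by simp
  then show ?thesis
    using chi_trivial_on_stab_perm_act[OF \<tau> j] chi_trivial_on_stab_perm_act[OF inv_in_W[OF \<tau>], of k]
      k j by auto
qed

lemma Jset_iff:
  "j \<in> Jset d W \<chi> L \<longleftrightarrow> j \<in> tuples L d \<and> orbit_min j = j \<and> chi_trivial_on_stab j"
proof -
  have lex: "(\<forall>\<sigma>\<in>W. perm_act d \<sigma> j = j \<or> (j, perm_act d \<sigma> j) \<in> lexord {(a, b). a < b})
      \<longleftrightarrow> (\<forall>k\<in>W_orbit j. j \<le> k)"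
    unfolding W_orbit_def list_le_def list_less_def by (auto simp: eq_commute)
  have min: "(\<forall>k\<in>W_orbit j. j \<le> k) \<longleftrightarrow> orbit_min j = j" if "j \<in> tuples L d"
  proof
    have j: "length j = d" using that by (simp add: tuples_def)
    show "\<forall>k\<in>W_orbit j. j \<le> k \<Longrightarrow> orbit_min j = j"
      using orbit_min_in_W_orbit[OF j] orbit_min_le[OF self_in_W_orbit[OF j]] by auto
  qed (metis orbit_min_le)
  have stab: "(\<forall>\<sigma>\<in>W. perm_act d \<sigma> j = j \<longrightarrow> \<chi> \<sigma> = 1) \<longleftrightarrow> chi_trivial_on_stab j"
    unfolding chi_trivial_on_stab_def W_stab_def by blast
  show ?thesis
    unfolding Jset_def mem_Collect_eq lex stab using min by blast
qed

lemma Jset_in_tuples: "j \<in> Jset d W \<chi> L \<Longrightarrow> j \<in> tuples L d"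
  by (simp add: Jset_def)

lemma length_Jset: "j \<in> Jset d W \<chi> L \<Longrightarrow> length j = d"
  by (simp add: Jset_def tuples_def)

lemma Jset_eq_if_W_orbit:
  assumes "j \<in> Jset d W \<chi> L" and "k \<in> Jset d W \<chi> L'" and "k \<in> W_orbit j"
  shows "k = j"
  using assms orbit_min_eq[OF assms(3) length_Jset[OF assms(1)]] by (simp add: Jset_iff)

lemma finite_Jset: "finite L \<Longrightarrow> finite (Jset d W \<chi> L)"
  using finite_tuples by (rule finite_subset[rotated]) (auto simp: Jset_def)

section \<open>Symmetry and specialisation of \<open>g\<close>\<close>

lemma W_orbit_map_inj:
  assumes "inj \<pi>" and "length k = d" and "map \<pi> j \<in> W_orbit (map \<pi> k)"
  shows "j \<in> W_orbit k"
proof -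
  obtain \<sigma> where \<sigma>: "\<sigma> \<in> W" and "map \<pi> j = perm_act d \<sigma> (map \<pi> k)"
    using assms(3) by (auto simp: W_orbit_def)
  then have "map \<pi> j = map \<pi> (perm_act d \<sigma> k)"
    using map_perm_act[OF W_permutes[OF \<sigma>] assms(2)] by simp
  then have "j = perm_act d \<sigma> k" using assms(1) by simp
  then show ?thesis using perm_act_in_W_orbit[OF \<sigma>] by simp
qed

lemma chi_trivial_on_stab_map_inj:
  assumes "inj \<pi>" and "length j = d"
  shows "chi_trivial_on_stab (map \<pi> j) \<longleftrightarrow> chi_trivial_on_stab j"
proof -
  have "perm_act d \<sigma> (map \<pi> j) = map \<pi> j \<longleftrightarrow> perm_act d \<sigma> j = j" if "\<sigma> \<in> W" for \<sigma>
    using map_perm_act[OF W_permutes[OF that] assms(2), of \<pi>] assms(1) by (metis inj_map_eq_map)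
  then have "W_stab (map \<pi> j) = W_stab j"
    unfolding W_stab_def by blast
  then show ?thesis by (simp add: chi_trivial_on_stab_def)
qed

lemma monom_W_orbit: "k \<in> W_orbit j \<Longrightarrow> monom d x k = monom d x j"
  unfolding W_orbit_def using monom_perm_act[OF W_permutes] by auto

lemma orbit_min_map_in_Jset:
  assumes \<pi>: "\<pi> permutes {0..n}" and j: "j \<in> Jset d W \<chi> {0..n}"
  shows "orbit_min (map \<pi> j) \<in> Jset d W \<chi> {0..n}"
proof -
  have lj: "length (map \<pi> j) = d" using length_Jset[OF j] by simp
  have "set j \<subseteq> {0..n}" using j by (simp add: Jset_iff tuples_def)
  then have "map \<pi> j \<in> tuples {0..n} d"
    using lj permutes_image[OF \<pi>] by (auto simp: tuples_def)
  moreover obtain \<sigma> where \<sigma>: "\<sigma> \<in> W" and min: "orbit_min (map \<pi> j) = perm_act d \<sigma> (map \<pi> j)"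
    using orbit_min_in_W_orbit[OF lj] by (auto simp: W_orbit_def)
  ultimately have "orbit_min (map \<pi> j) \<in> tuples {0..n} d"
    using perm_act_in_tuples_iff[OF \<sigma> lj] by simp
  moreover have "chi_trivial_on_stab (orbit_min (map \<pi> j))"
    using chi_trivial_on_stab_W_orbit[OF orbit_min_in_W_orbit[OF lj] lj]
      chi_trivial_on_stab_map_inj[OF permutes_inj[OF \<pi>] length_Jset[OF j]] j
    by (simp add: Jset_iff)
  ultimately show ?thesis using orbit_min_idem[OF lj] by (simp add: Jset_iff)
qed

lemma inj_on_orbit_min_map:
  assumes "inj \<pi>"
  shows "inj_on (\<lambda>j. orbit_min (map \<pi> j)) (Jset d W \<chi> L)"
proof (rule inj_onI)
  fix j k assume j: "j \<in> Jset d W \<chi> L" and k: "k \<in> Jset d W \<chi> L"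
    and eq: "orbit_min (map \<pi> j) = orbit_min (map \<pi> k)"
  have "map \<pi> j \<in> W_orbit (map \<pi> k)"
    using W_orbit_if_orbit_min_eq eq length_Jset[OF j] length_Jset[OF k] by simp
  then have "j \<in> W_orbit k" using W_orbit_map_inj[OF assms length_Jset[OF k]] by simp
  then show "j = k" using Jset_eq_if_W_orbit[OF k j] by simp
qed

lemma g_poly_permute:
  assumes \<pi>: "\<pi> permutes {0..n}"
  shows "g_poly d W \<chi> n (x \<circ> \<pi>) = g_poly d W \<chi> n x"
proof -
  define J where "J = Jset d W \<chi> {0..n}"
  define \<Phi> where "\<Phi> j = orbit_min (map \<pi> j)" for j
  have inj: "inj_on \<Phi> J"
    unfolding \<Phi>_def J_def using inj_on_orbit_min_map[OF permutes_inj[OF \<pi>]] .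
  have "\<Phi> ` J = J"
    using endo_inj_surj[OF _ _ inj] finite_Jset orbit_min_map_in_Jset[OF \<pi>]
    unfolding J_def \<Phi>_def by blast
  then have "g_poly d W \<chi> n x = (\<Sum>j\<in>J. monom d x (\<Phi> j))"
    using sum.reindex[OF inj, of "monom d x"] by (simp add: g_poly_def J_def monom_def)
  also have "\<dots> = (\<Sum>j\<in>J. monom d (x \<circ> \<pi>) j)"
  proof (rule sum.cong[OF refl])
    fix j assume "j \<in> J"
    then have j: "length j = d" by (simp add: J_def length_Jset)
    then have "monom d x (orbit_min (map \<pi> j)) = monom d x (map \<pi> j)"
      using monom_W_orbit[OF orbit_min_in_W_orbit, of "map \<pi> j"] by simp
    then show "monom d x (\<Phi> j) = monom d (x \<circ> \<pi>) j"
      using monom_map[OF j] by (simp add: \<Phi>_def)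
  qed
  finally show ?thesis by (simp add: g_poly_def J_def monom_def)
qed

lemma g_coeff_eq_card:
  assumes "size m = d" and "set_mset m \<subseteq> {0..n}"
  shows "g_coeff d W \<chi> m = card {j \<in> Jset d W \<chi> {0..n}. mset j = m}"
proof -
  have "j \<in> Jset d W \<chi> UNIV \<longleftrightarrow> j \<in> Jset d W \<chi> {0..n}" if "mset j = m" for j
  proof -
    have "set j \<subseteq> {0..n}" using that assms(2) by auto
    then show ?thesis by (simp add: Jset_iff tuples_def)
  qed
  then have "{j \<in> Jset d W \<chi> UNIV. mset j = m} = {j \<in> Jset d W \<chi> {0..n}. mset j = m}"
    by blast
  then show ?thesis unfolding g_coeff_def by simp
qed

lemma g_spec_eq_g_poly: "g_spec d W \<chi> n x = g_poly d W \<chi> n x"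
proof -
  define J where "J = Jset d W \<chi> {0..n}"
  define M where "M = {m. size m = d \<and> set_mset m \<subseteq> {0..n}}"
  define P where "P m = (\<Prod>k\<in>set_mset m. x k ^ count m k)" for m
  have finite_M: "finite M"
    using finite_multisets_of_size[of "{0..n}" d] by (simp add: M_def multisets_of_size_def conj_commute)
  have J_M: "mset ` J \<subseteq> M"
  proof
    fix m assume "m \<in> mset ` J"
    then obtain j where "j \<in> J" and m: "m = mset j" by blast
    then have "length j = d" and "set j \<subseteq> {0..n}"
      by (simp_all add: J_def Jset_iff tuples_def)
    then show "m \<in> M" by (simp add: M_def m)
  qed
  have "g_poly d W \<chi> n x = (\<Sum>j\<in>J. P (mset j))"
    unfolding g_poly_def J_def P_def
    using monom_eq_prod_count[OF length_Jset] by (intro sum.cong) (simp_all add: monom_def)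
  also have "\<dots> = (\<Sum>m\<in>M. \<Sum>j\<in>{j \<in> J. mset j = m}. P (mset j))"
    using finite_Jset[of "{0..n}"] by (intro sum.group[OF _ finite_M J_M, symmetric]) (simp add: J_def)
  also have "\<dots> = (\<Sum>m\<in>M. of_nat (card {j \<in> J. mset j = m}) * P m)"
    by (rule sum.cong) auto
  also have "\<dots> = g_spec d W \<chi> n x"
    unfolding g_spec_def M_def[symmetric] P_def[symmetric] J_def
  proof (rule sum.cong[OF refl])
    fix m assume "m \<in> M"
    then have "size m = d" and "set_mset m \<subseteq> {0..n}" by (simp_all add: M_def)
    then show "of_nat (card {j \<in> Jset d W \<chi> {0..n}. mset j = m}) * P m = of_nat (g_coeff d W \<chi> m) * P m"
      by (simp add: g_coeff_eq_card)
  qed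
  finally show ?thesis by simp
qed

end

section \<open>Traces on quotient spaces\<close>

lemma lin_span_zero: "(\<lambda>k. 0) \<in> lin_span S"
  unfolding lin_span_def by (rule CollectI, rule exI[of _ "{}"]) auto

lemma lin_span_superset: "s \<in> S \<Longrightarrow> s \<in> lin_span S"
  unfolding lin_span_def by (rule CollectI, rule exI[of _ "{s}"], rule exI[of _ "\<lambda>_. 1"]) auto

lemma lin_span_scale: "u \<in> lin_span S \<Longrightarrow> (\<lambda>k. c * u k) \<in> lin_span S"
proof -
  assume "u \<in> lin_span S"
  then obtain F a where F: "finite F" "F \<subseteq> S" "u = (\<lambda>k. \<Sum>s\<in>F. a s * s k)"
    unfolding lin_span_def by blast
  have "(\<lambda>k. c * u k) = (\<lambda>k. \<Sum>s\<in>F. (c * a s) * s k)"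
    using F(3) by (simp add: sum_distrib_left mult.assoc)
  with F(1,2) show ?thesis
    unfolding lin_span_def by (intro CollectI exI[of _ F] exI[of _ "\<lambda>s. c * a s"]) simp
qed

lemma lin_span_add:
  assumes "u \<in> lin_span S" and "v \<in> lin_span S"
  shows "(\<lambda>k. u k + v k) \<in> lin_span S"
proof -
  obtain F1 a1 where F1: "finite F1" "F1 \<subseteq> S" "u = (\<lambda>k. \<Sum>s\<in>F1. a1 s * s k)"
    using assms(1) unfolding lin_span_def by blast
  obtain F2 a2 where F2: "finite F2" "F2 \<subseteq> S" "v = (\<lambda>k. \<Sum>s\<in>F2. a2 s * s k)"
    using assms(2) unfolding lin_span_def by blast
  define a where "a s = (if s \<in> F1 then a1 s else 0) + (if s \<in> F2 then a2 s else 0)" for s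
  have "(\<Sum>s\<in>F1 \<union> F2. a s * s k) = (\<Sum>s\<in>F1. a1 s * s k) + (\<Sum>s\<in>F2. a2 s * s k)" for k
  proof -
    have "(\<Sum>s\<in>F1 \<union> F2. a s * s k) = (\<Sum>s\<in>F1 \<union> F2. if s \<in> F1 then a1 s * s k else 0)
        + (\<Sum>s\<in>F1 \<union> F2. if s \<in> F2 then a2 s * s k else 0)"
      unfolding sum.distrib[symmetric] a_def by (intro sum.cong) (auto simp: distrib_right)
    also have "\<dots> = (\<Sum>s\<in>F1. a1 s * s k) + (\<Sum>s\<in>F2. a2 s * s k)"
      using F1(1) F2(1) by (simp add: sum.inter_restrict[symmetric] Int_absorb1)
    finally show ?thesis .
  qed
  then have "(\<lambda>k. u k + v k) = (\<lambda>k. \<Sum>s\<in>F1 \<union> F2. a s * s k)"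
    using F1(3) F2(3) by simp
  with F1 F2 show ?thesis
    unfolding lin_span_def by (intro CollectI exI[of _ "F1 \<union> F2"] exI[of _ a]) simp
qed

lemma lin_span_sum:
  "finite I \<Longrightarrow> (\<And>i. i \<in> I \<Longrightarrow> u i \<in> lin_span S) \<Longrightarrow> (\<lambda>k. \<Sum>i\<in>I. c i * u i k) \<in> lin_span S"
proof (induction I rule: finite_induct)
  case empty
  then show ?case using lin_span_zero by simp
next
  case (insert i I)
  then show ?case using lin_span_add[OF lin_span_scale[of "u i" S "c i"] insert.IH] by simp
qed

lemma linear_functional_sum:
  fixes \<psi> :: "(nat list \<Rightarrow> 'a::field) \<Rightarrow> 'a"
  assumes add: "\<And>u v. \<psi> (\<lambda>k. u k + v k) = \<psi> u + \<psi> v"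
    and scale: "\<And>c u. \<psi> (\<lambda>k. c * u k) = c * \<psi> u"
  shows "\<psi> (\<lambda>k. \<Sum>j\<in>F. a j * g j k) = (\<Sum>j\<in>F. a j * \<psi> (g j))"
proof (induction F rule: infinite_finite_induct)
  case (infinite F)
  then show ?case using scale[of 0 "\<lambda>k. 0"] by simp
next
  case empty
  then show ?case using scale[of 0 "\<lambda>k. 0"] by simp
next
  case (insert j F)
  then show ?case by (simp add: add scale)
qed

lemma linear_functional_lin_span_zero:
  fixes \<psi> :: "(nat list \<Rightarrow> 'a::field) \<Rightarrow> 'a"
  assumes u: "u \<in> lin_span S"
    and add: "\<And>u v. \<psi> (\<lambda>k. u k + v k) = \<psi> u + \<psi> v"
    and scale: "\<And>c u. \<psi> (\<lambda>k. c * u k) = c * \<psi> u"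
    and zero: "\<And>s. s \<in> S \<Longrightarrow> \<psi> s = 0"
  shows "\<psi> u = 0"
proof -
  obtain F a where "F \<subseteq> S" and "u = (\<lambda>k. \<Sum>s\<in>F. a s * s k)"
    using u unfolding lin_span_def by blast
  then have "\<psi> u = (\<Sum>s\<in>F. a s * \<psi> s)"
    using linear_functional_sum[of \<psi>, OF add scale, of a "\<lambda>s. s"] by simp
  also have "\<dots> = 0"
    using \<open>F \<subseteq> S\<close> zero by (simp add: subset_iff)
  finally show ?thesis .
qed

text \<open>The vectors \<open>e i\<close> represent a basis of \<open>V / lin_span S\<close> with dual basis \<open>\<psi> i\<close>,
  in which \<open>f\<close> is diagonal.\<close>

locale quotient_dual_basis =
  fixes V :: "(nat list \<Rightarrow> 'a::field) set" and S :: "(nat list \<Rightarrow> 'a) set"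
    and f :: "(nat list \<Rightarrow> 'a) \<Rightarrow> nat list \<Rightarrow> 'a"
    and I :: "'i set" and e :: "'i \<Rightarrow> nat list \<Rightarrow> 'a"
    and \<psi> :: "'i \<Rightarrow> (nat list \<Rightarrow> 'a) \<Rightarrow> 'a" and eigval :: "'i \<Rightarrow> 'a"
  assumes finite_I: "finite I"
    and e_in_V: "i \<in> I \<Longrightarrow> e i \<in> V"
    and f_in_V: "v \<in> V \<Longrightarrow> f v \<in> V"
    and \<psi>_add: "\<psi> i (\<lambda>k. u k + v k) = \<psi> i u + \<psi> i v"
    and \<psi>_scale: "\<psi> i (\<lambda>k. c * u k) = c * \<psi> i u"
    and \<psi>_lin_span: "i \<in> I \<Longrightarrow> u \<in> lin_span S \<Longrightarrow> \<psi> i u = 0"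
    and \<psi>_e: "i \<in> I \<Longrightarrow> i' \<in> I \<Longrightarrow> \<psi> i (e i') = (if i = i' then 1 else 0)"
    and decompose: "v \<in> V \<Longrightarrow> (\<lambda>k. v k - (\<Sum>i\<in>I. \<psi> i v * e i k)) \<in> lin_span S"
    and \<psi>_f: "i \<in> I \<Longrightarrow> v \<in> V \<Longrightarrow> \<psi> i (f v) = eigval i * \<psi> i v"
begin

abbreviation U :: "(nat list \<Rightarrow> 'a) set" where
  "U \<equiv> lin_span S"

definition quot_basis :: "(nat list \<Rightarrow> 'a) set \<Rightarrow> bool" where
  "quot_basis B \<longleftrightarrow> finite B \<and> B \<subseteq> V \<and> indep_mod U B \<and>
     (\<forall>v\<in>V. \<exists>u\<in>U. \<exists>a. v = (\<lambda>k. u k + (\<Sum>b\<in>B. a b * b k)))"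

lemma \<psi>_sum: "\<psi> i (\<lambda>k. \<Sum>j\<in>F. a j * g j k) = (\<Sum>j\<in>F. a j * \<psi> i (g j))"
  by (rule linear_functional_sum[of "\<psi> i", OF \<psi>_add \<psi>_scale])

lemma \<psi>_diff: "\<psi> i (\<lambda>k. u k - v k) = \<psi> i u - \<psi> i v"
  using \<psi>_add[of i u "\<lambda>k. - 1 * v k"] \<psi>_scale[of i "- 1" v] by simp

lemma inj_on_e: "inj_on e I"
  by (rule inj_onI) (metis \<psi>_e one_neq_zero)

lemma sum_e_delta:
  assumes "i \<in> I"
  shows "(\<Sum>j\<in>I. (if j = i then c else 0) * e j k) = c * e i k"
proof -
  have "(\<Sum>j\<in>I. (if j = i then c else 0) * e j k) = (\<Sum>j\<in>I. if j = i then c * e j k else 0)"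
    by (rule sum.cong) auto
  then show ?thesis using assms finite_I by simp
qed

lemma f_e_eigen: "i \<in> I \<Longrightarrow> (\<lambda>k. f (e i) k - eigval i * e i k) \<in> U"
proof -
  assume i: "i \<in> I"
  have "\<psi> j (f (e i)) = (if j = i then eigval i else 0)" if "j \<in> I" for j
    using that i by (simp add: \<psi>_f e_in_V \<psi>_e)
  then have "(\<Sum>j\<in>I. \<psi> j (f (e i)) * e j k) = eigval i * e i k" for k
    using sum_e_delta[OF i] by (simp cong: sum.cong)
  then show ?thesis
    using decompose[OF f_in_V[OF e_in_V[OF i]]] by simp
qed

lemma quot_basis_e: "quot_basis (e ` I)"
  unfolding quot_basis_def
proof (intro conjI ballI)
  show "finite (e ` I)" using finite_I by simp
  show "e ` I \<subseteq> V" using e_in_V by blast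
  show "indep_mod U (e ` I)"
    unfolding indep_mod_def
  proof (intro allI impI ballI)
    fix a b assume comb: "(\<lambda>k. \<Sum>b\<in>e ` I. a b * b k) \<in> U" and "b \<in> e ` I"
    then obtain i where i: "i \<in> I" "b = e i" by blast
    have "0 = \<psi> i (\<lambda>k. \<Sum>b\<in>e ` I. a b * b k)" using \<psi>_lin_span[OF i(1) comb] by simp
    also have "\<dots> = (\<Sum>j\<in>I. a (e j) * \<psi> i (e j))"
      by (simp add: \<psi>_sum sum.reindex[OF inj_on_e])
    also have "\<dots> = a b" using i finite_I by (simp add: \<psi>_e if_distrib sum.delta cong: if_cong)
    finally show "a b = 0" by simp
  qed
  fix v assume v: "v \<in> V"
  let ?a = "\<lambda>b. \<psi> (the_inv_into I e b) v"
  have "(\<Sum>b\<in>e ` I. ?a b * b k) = (\<Sum>i\<in>I. \<psi> i v * e i k)" for k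
    by (simp add: sum.reindex[OF inj_on_e] the_inv_into_f_f[OF inj_on_e])
  then have "v = (\<lambda>k. (v k - (\<Sum>i\<in>I. \<psi> i v * e i k)) + (\<Sum>b\<in>e ` I. ?a b * b k))"
    by simp
  then show "\<exists>u\<in>U. \<exists>a. v = (\<lambda>k. u k + (\<Sum>b\<in>e ` I. a b * b k))"
    by (intro bexI[OF _ decompose[OF v]] exI[of _ ?a])
qed

lemma trace_exists:
  "\<exists>c. (\<forall>b\<in>e ` I. (\<lambda>k. f b k - (\<Sum>b'\<in>e ` I. c b b' * b' k)) \<in> U) \<and>
       (\<Sum>i\<in>I. eigval i) = (\<Sum>b\<in>e ` I. c b b)"
proof -
  define c where "c b b' = (if b' = b then eigval (the_inv_into I e b) else 0)" for b b'
  have "(\<lambda>k. f b k - (\<Sum>b'\<in>e ` I. c b b' * b' k)) \<in> U" if "b \<in> e ` I" for b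
  proof -
    obtain i where i: "i \<in> I" "b = e i" using \<open>b \<in> e ` I\<close> by blast
    have "(\<Sum>b'\<in>e ` I. c b b' * b' k) = eigval i * e i k" for k
      using i sum_e_delta[OF i(1)]
      by (simp add: c_def sum.reindex[OF inj_on_e] the_inv_into_f_f[OF inj_on_e] inj_on_eq_iff[OF inj_on_e])
    then show ?thesis using f_e_eigen[OF i(1)] i(2) by simp
  qed
  moreover have "(\<Sum>i\<in>I. eigval i) = (\<Sum>b\<in>e ` I. c b b)"
    by (simp add: c_def sum.reindex[OF inj_on_e] the_inv_into_f_f[OF inj_on_e])
  ultimately show ?thesis by blast
qed

lemma basis_change_right_inverse:
  assumes A: "\<forall>i\<in>I. (\<lambda>k. e i k - (\<Sum>b\<in>B. A i b * b k)) \<in> U" and i: "i \<in> I" "i' \<in> I"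
  shows "(\<Sum>b\<in>B. A i b * \<psi> i' b) = (if i = i' then 1 else 0)"
proof -
  have "0 = \<psi> i' (\<lambda>k. e i k - (\<Sum>b\<in>B. A i b * b k))"
    using \<psi>_lin_span A i by simp
  also have "\<dots> = \<psi> i' (e i) - (\<Sum>b\<in>B. A i b * \<psi> i' b)"
    by (simp add: \<psi>_diff \<psi>_sum)
  finally show ?thesis using \<psi>_e[OF i(2,1)] by auto
qed

lemma basis_change_left_inverse:
  assumes B: "quot_basis B" and A: "\<forall>i\<in>I. (\<lambda>k. e i k - (\<Sum>b'\<in>B. A i b' * b' k)) \<in> U"
    and b: "b \<in> B" "b' \<in> B"
  shows "(\<Sum>i\<in>I. \<psi> i b * A i b') = (if b' = b then 1 else 0)"
proof -
  define \<alpha> where "\<alpha> b' = (if b' = b then 1 else 0) - (\<Sum>i\<in>I. \<psi> i b * A i b')" for b'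
  have finB: "finite B" and "b \<in> V" and indep: "indep_mod U B"
    using B b unfolding quot_basis_def by auto
  \<comment> \<open>Modulo \<open>U\<close>, \<open>b\<close> is both itself and \<open>\<Sum>i. \<psi> i b \<cdot> e i \<equiv> \<Sum>i b'. \<psi> i b \<cdot> A i b' \<cdot> b'\<close>.\<close>
  have "(\<lambda>k. (b k - (\<Sum>i\<in>I. \<psi> i b * e i k)) + (\<Sum>i\<in>I. \<psi> i b * (e i k - (\<Sum>b'\<in>B. A i b' * b' k)))) \<in> U"
    using A by (intro lin_span_add decompose[OF \<open>b \<in> V\<close>] lin_span_sum finite_I) auto
  moreover have "(\<Sum>b'\<in>B. \<alpha> b' * b' k) =
      (b k - (\<Sum>i\<in>I. \<psi> i b * e i k)) + (\<Sum>i\<in>I. \<psi> i b * (e i k - (\<Sum>b'\<in>B. A i b' * b' k)))" for k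
  proof -
    have "(\<Sum>b'\<in>B. \<alpha> b' * b' k) =
        (\<Sum>b'\<in>B. if b' = b then b' k else 0) - (\<Sum>b'\<in>B. \<Sum>i\<in>I. \<psi> i b * A i b' * b' k)"
      unfolding \<alpha>_def sum_subtractf[symmetric] sum_distrib_right
      by (rule sum.cong) (auto simp: left_diff_distrib sum_distrib_right)
    also have "\<dots> = b k - (\<Sum>i\<in>I. \<Sum>b'\<in>B. \<psi> i b * A i b' * b' k)"
      using finB b(1) by (simp add: sum.swap[of _ B])
    finally show ?thesis
      by (simp add: right_diff_distrib sum_subtractf sum_distrib_left mult.assoc)
  qed
  ultimately have "(\<lambda>k. \<Sum>b'\<in>B. \<alpha> b' * b' k) \<in> U" by simp
  then have "\<alpha> b' = 0" using indep b(2) unfolding indep_mod_def by blast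
  then show ?thesis unfolding \<alpha>_def by simp
qed

lemma quot_basis_coords:
  assumes B: "quot_basis B"
  shows "\<exists>A. \<forall>i\<in>I. (\<lambda>k. e i k - (\<Sum>b\<in>B. A i b * b k)) \<in> U"
proof -
  have "\<exists>a. (\<lambda>k. e i k - (\<Sum>b\<in>B. a b * b k)) \<in> U" if i: "i \<in> I" for i
  proof -
    obtain u a where u: "u \<in> U" and "e i = (\<lambda>k. u k + (\<Sum>b\<in>B. a b * b k))"
      using B e_in_V[OF i] unfolding quot_basis_def by blast
    then have "(\<lambda>k. e i k - (\<Sum>b\<in>B. a b * b k)) = u" by auto
    with u show ?thesis by blast
  qed
  then show ?thesis by (intro bchoice ballI)
qed

lemma trace_unique:
  assumes B: "quot_basis B" and c: "\<forall>b\<in>B. (\<lambda>k. f b k - (\<Sum>b'\<in>B. c b b' * b' k)) \<in> U"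
  shows "(\<Sum>b\<in>B. c b b) = (\<Sum>i\<in>I. eigval i)"
proof -
  obtain A where A: "\<forall>i\<in>I. (\<lambda>k. e i k - (\<Sum>b\<in>B. A i b * b k)) \<in> U"
    using quot_basis_coords[OF B] by blast
  have finB: "finite B" and BV: "B \<subseteq> V" using B unfolding quot_basis_def by auto
  have eig: "(\<Sum>b'\<in>B. c b b' * \<psi> i b') = eigval i * \<psi> i b" if "i \<in> I" "b \<in> B" for i b
  proof -
    have "0 = \<psi> i (\<lambda>k. f b k - (\<Sum>b'\<in>B. c b b' * b' k))" using \<psi>_lin_span c that by simp
    also have "\<dots> = eigval i * \<psi> i b - (\<Sum>b'\<in>B. c b b' * \<psi> i b')"
      using that BV by (simp add: \<psi>_diff \<psi>_sum \<psi>_f subsetD)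
    finally show ?thesis by simp
  qed
  have diag: "c b b = (\<Sum>i\<in>I. A i b * (\<Sum>b'\<in>B. c b b' * \<psi> i b'))" if b: "b \<in> B" for b
  proof -
    have "c b b = (\<Sum>b'\<in>B. if b = b' then c b b' else 0)"
      using finB b by simp
    also have "\<dots> = (\<Sum>b'\<in>B. c b b' * (\<Sum>i\<in>I. \<psi> i b' * A i b))"
      using b by (intro sum.cong refl) (simp add: basis_change_left_inverse[OF B A])
    also have "\<dots> = (\<Sum>b'\<in>B. \<Sum>i\<in>I. A i b * (c b b' * \<psi> i b'))"
      by (simp add: sum_distrib_left mult_ac)
    also have "\<dots> = (\<Sum>i\<in>I. \<Sum>b'\<in>B. A i b * (c b b' * \<psi> i b'))"
      by (rule sum.swap)
    also have "\<dots> = (\<Sum>i\<in>I. A i b * (\<Sum>b'\<in>B. c b b' * \<psi> i b'))"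
      by (simp add: sum_distrib_left)
    finally show ?thesis .
  qed
  have "(\<Sum>b\<in>B. c b b) = (\<Sum>b\<in>B. \<Sum>i\<in>I. A i b * (\<Sum>b'\<in>B. c b b' * \<psi> i b'))"
    by (rule sum.cong) (simp_all add: diag)
  also have "\<dots> = (\<Sum>i\<in>I. \<Sum>b\<in>B. A i b * (eigval i * \<psi> i b))"
    by (subst sum.swap) (simp add: eig cong: sum.cong)
  also have "\<dots> = (\<Sum>i\<in>I. eigval i * (\<Sum>b\<in>B. A i b * \<psi> i b))"
    by (simp add: sum_distrib_left mult_ac)
  also have "\<dots> = (\<Sum>i\<in>I. eigval i)"
    by (simp add: basis_change_right_inverse[OF A] cong: sum.cong)
  finally show ?thesis .
qed

lemma quot_trace_eq: "quot_trace V U f = (\<Sum>i\<in>I. eigval i)"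
proof -
  have "quot_trace V U f = (THE t. \<exists>B c. quot_basis B \<and>
      (\<forall>b\<in>B. (\<lambda>k. f b k - (\<Sum>b'\<in>B. c b b' * b' k)) \<in> U) \<and> t = (\<Sum>b\<in>B. c b b))"
    unfolding quot_trace_def quot_basis_def by (simp add: conj_assoc)
  also have "\<dots> = (\<Sum>i\<in>I. eigval i)"
  proof (rule the_equality)
    show "\<exists>B c. quot_basis B \<and> (\<forall>b\<in>B. (\<lambda>k. f b k - (\<Sum>b'\<in>B. c b b' * b' k)) \<in> U) \<and>
        (\<Sum>i\<in>I. eigval i) = (\<Sum>b\<in>B. c b b)"
      using quot_basis_e trace_exists by blast
  qed (use trace_unique in blast)
  finally show ?thesis .
qed

end

section \<open>The trace on the semi-symmetric power\<close>

definition unit_tensor :: "nat list \<Rightarrow> nat list \<Rightarrow> 'a::zero_neq_one" where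
  "unit_tensor j = (\<lambda>k. if k = j then 1 else 0)"

lemma unit_tensor_in_tensor_space: "j \<in> tuples {0..n} d \<Longrightarrow> unit_tensor j \<in> tensor_space n d"
  by (auto simp: tensor_space_def unit_tensor_def)

lemma tensor_space_expand:
  assumes "z \<in> tensor_space n d"
  shows "z k = (\<Sum>j\<in>tuples {0..n} d. z j * unit_tensor j k)"
proof -
  have "(\<Sum>j\<in>tuples {0..n} d. z j * unit_tensor j k) = (\<Sum>j\<in>tuples {0..n} d. if k = j then z k else 0)"
    by (rule sum.cong) (auto simp: unit_tensor_def)
  also have "\<dots> = z k"
    using assms finite_tuples[of "{0..n}" d] by (auto simp: tensor_space_def)
  finally show ?thesis by simp
qed

lemma prod_diag_mat:
  assumes "length j = d" and "length k = d"
  shows "(\<Prod>i<d. diag_mat x (j ! i) (k ! i)) = (if k = j then monom d x j else 0)"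
proof (cases "k = j")
  case False
  then obtain i where "i < d" and "j ! i \<noteq> k ! i" using assms nth_equalityI by metis
  then show ?thesis
    using False by (intro trans[OF prod_zero]) (auto simp: diag_mat_def intro!: bexI[of _ i])
qed (simp add: diag_mat_def monom_def)

lemma tensor_map_diag_mat:
  "tensor_map n d (diag_mat x) z k = (if k \<in> tuples {0..n} d then monom d x k * z k else 0)"
proof (cases "k \<in> tuples {0..n} d")
  case True
  then have k: "length k = d" by (simp add: tuples_def)
  have "tensor_map n d (diag_mat x) z k =
      (\<Sum>k'\<in>tuples {0..n} d. if k' = k then monom d x k * z k' else 0)"
    unfolding tensor_map_def using True
    by (simp, intro sum.cong refl) (simp add: prod_diag_mat[OF k] tuples_def)
  then show ?thesis using True finite_tuples[of "{0..n}" d] by simp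
qed (simp add: tensor_map_def)

lemma tensor_map_in_tensor_space: "tensor_map n d A z \<in> tensor_space n d"
  by (simp add: tensor_space_def tensor_map_def)

context perm_group_char
begin

lemma perm_tensor_unit_tensor:
  assumes \<sigma>: "\<sigma> \<in> W" and j: "length j = d"
  shows "perm_tensor d \<sigma> (unit_tensor j) = unit_tensor (perm_act d \<sigma> j)"
proof
  fix k
  show "perm_tensor d \<sigma> (unit_tensor j) k = unit_tensor (perm_act d \<sigma> j) k"
  proof (cases "length k = d")
    case True
    then have "perm_act d (inv \<sigma>) k = j \<longleftrightarrow> k = perm_act d \<sigma> j"
      using perm_act_perm_act_inv[OF \<sigma>] perm_act_inv_perm_act[OF \<sigma> j] by metis
    then show ?thesis using True by (simp add: perm_tensor_def unit_tensor_def)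
  qed (auto simp: perm_tensor_def unit_tensor_def)
qed

lemma unit_tensor_perm_act_congr:
  assumes \<sigma>: "\<sigma> \<in> W" and j: "j \<in> tuples {0..n} d"
  shows "(\<lambda>k. inverse (\<chi> \<sigma>) * unit_tensor j k - unit_tensor (perm_act d \<sigma> j) k) \<in> chi_sub n d W \<chi>"
proof -
  have "(\<lambda>k. inverse (\<chi> \<sigma>) * unit_tensor j k - perm_tensor d \<sigma> (unit_tensor j) k) \<in> chi_sub n d W \<chi>"
    unfolding chi_sub_def
    by (rule lin_span_superset) (use \<sigma> unit_tensor_in_tensor_space[OF j] in blast)
  moreover have "length j = d" using j by (simp add: tuples_def)
  then have "perm_tensor d \<sigma> (unit_tensor j) = (unit_tensor (perm_act d \<sigma> j) :: nat list \<Rightarrow> 'a)"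
    by (rule perm_tensor_unit_tensor[OF \<sigma>])
  ultimately show ?thesis by simp
qed

lemma unit_tensor_in_chi_sub:
  assumes j: "j \<in> tuples {0..n} d" and nontriv: "\<not> chi_trivial_on_stab j"
  shows "unit_tensor j \<in> chi_sub n d W \<chi>"
proof -
  obtain \<sigma> where \<sigma>: "\<sigma> \<in> W" "perm_act d \<sigma> j = j" and "\<chi> \<sigma> \<noteq> 1"
    using nontriv by (auto simp: chi_trivial_on_stab_def W_stab_def)
  define c where "c = inverse (\<chi> \<sigma>) - 1"
  then have c: "c \<noteq> 0" using \<open>\<chi> \<sigma> \<noteq> 1\<close> by simp
  have "(\<lambda>k. inverse (\<chi> \<sigma>) * unit_tensor j k - unit_tensor j k) \<in> chi_sub n d W \<chi>"
    using unit_tensor_perm_act_congr[OF \<sigma>(1) j] \<sigma>(2) by simp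
  also have "(\<lambda>k. inverse (\<chi> \<sigma>) * unit_tensor j k - unit_tensor j k) = (\<lambda>k. c * unit_tensor j k)"
    by (simp add: fun_eq_iff left_diff_distrib c_def)
  finally have "(\<lambda>k. inverse c * (c * unit_tensor j k)) \<in> chi_sub n d W \<chi>"
    unfolding chi_sub_def by (rule lin_span_scale)
  then show ?thesis using c by (simp add: mult.assoc[symmetric])
qed

text \<open>The coefficient of the class of \<open>e\<^sub>j\<close> in \<open>[\<chi>]\<^sup>d(E)\<close>: a \<open>\<chi>\<close>-twisted orbit sum,
  normalised so that \<open>e\<^sub>j \<mapsto> 1\<close> when \<open>\<chi>\<close> is trivial on the stabiliser of \<open>j\<close>.\<close>

definition orbit_coord :: "nat list \<Rightarrow> (nat list \<Rightarrow> 'a) \<Rightarrow> 'a" where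
  "orbit_coord j z = (\<Sum>\<tau>\<in>W. inverse (\<chi> \<tau>) * z (perm_act d \<tau> j)) / of_nat (card (W_stab j))"

lemma orbit_coord_add: "orbit_coord j (\<lambda>k. u k + v k) = orbit_coord j u + orbit_coord j v"
  unfolding orbit_coord_def by (simp add: distrib_left sum.distrib add_divide_distrib)

lemma orbit_coord_scale: "orbit_coord j (\<lambda>k. c * u k) = c * orbit_coord j u"
  unfolding orbit_coord_def by (simp add: sum_distrib_left mult_ac)

lemma bij_betw_comp_left: "\<sigma> \<in> W \<Longrightarrow> bij_betw ((\<circ>) \<sigma>) W W"
  by (rule bij_betw_byWitness[where f' = "(\<circ>) (inv \<sigma>)"])
    (auto simp: comp_assoc[symmetric] inv_comp_cancel comp_inv_cancel comp_in_W inv_in_W)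

lemma orbit_coord_perm_tensor:
  assumes \<sigma>: "\<sigma> \<in> W" and j: "length j = d"
  shows "orbit_coord j (perm_tensor d \<sigma> z) = inverse (\<chi> \<sigma>) * orbit_coord j z"
proof -
  have "(\<Sum>\<tau>\<in>W. inverse (\<chi> \<tau>) * perm_tensor d \<sigma> z (perm_act d \<tau> j))
      = (\<Sum>\<tau>\<in>W. inverse (\<chi> \<tau>) * z (perm_act d (inv \<sigma> \<circ> \<tau>) j))"
    unfolding perm_tensor_def by (rule sum.cong) (simp_all add: perm_act_perm_act inv_in_W[OF \<sigma>])
  also have "\<dots> = (\<Sum>\<rho>\<in>W. inverse (\<chi> (\<sigma> \<circ> \<rho>)) * z (perm_act d (inv \<sigma> \<circ> (\<sigma> \<circ> \<rho>)) j))"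
    by (rule sum.reindex_bij_betw[OF bij_betw_comp_left[OF \<sigma>], symmetric])
  also have "\<dots> = inverse (\<chi> \<sigma>) * (\<Sum>\<rho>\<in>W. inverse (\<chi> \<rho>) * z (perm_act d \<rho> j))"
    unfolding sum_distrib_left
    by (rule sum.cong) (simp_all add: chi_comp[OF \<sigma>] comp_assoc[symmetric] inv_comp_cancel[OF \<sigma>] mult_ac)
  finally show ?thesis by (simp add: orbit_coord_def)
qed

lemma orbit_coord_chi_sub:
  assumes j: "length j = d" and u: "u \<in> chi_sub n d W \<chi>"
  shows "orbit_coord j u = 0"
proof (rule linear_functional_lin_span_zero[OF u[unfolded chi_sub_def] orbit_coord_add orbit_coord_scale])
  fix s assume "s \<in> {\<lambda>k. inverse (\<chi> \<sigma>) * z k - perm_tensor d \<sigma> z k | \<sigma> z. \<sigma> \<in> W \<and> z \<in> tensor_space n d}"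
  then obtain \<sigma> z where \<sigma>: "\<sigma> \<in> W" and s: "s = (\<lambda>k. inverse (\<chi> \<sigma>) * z k + (- 1) * perm_tensor d \<sigma> z k)"
    by auto
  show "orbit_coord j s = 0"
    unfolding s orbit_coord_add orbit_coord_scale orbit_coord_perm_tensor[OF \<sigma> j] by simp
qed

lemma orbit_coord_unit_tensor_notin: "k \<notin> W_orbit j \<Longrightarrow> orbit_coord j (unit_tensor k) = 0"
  unfolding orbit_coord_def unit_tensor_def W_orbit_def by (auto intro!: sum.neutral)

lemma orbit_coord_tensor_map_diag_mat:
  assumes j: "j \<in> tuples {0..n} d"
  shows "orbit_coord j (tensor_map n d (diag_mat x) z) = monom d x j * orbit_coord j z"
proof -
  have "tensor_map n d (diag_mat x) z (perm_act d \<tau> j) = monom d x j * z (perm_act d \<tau> j)"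
    if "\<tau> \<in> W" for \<tau>
    using j perm_act_in_tuples_iff[OF that] monom_perm_act[OF W_permutes[OF that], of x j]
    by (simp add: tensor_map_diag_mat tuples_def)
  then show ?thesis
    unfolding orbit_coord_def by (simp add: sum_distrib_left mult_ac cong: sum.cong)
qed

end

locale perm_group_char0 = perm_group_char d W \<chi> for d W and \<chi> :: "(nat \<Rightarrow> nat) \<Rightarrow> 'a::field_char_0"
begin

lemma orbit_coord_unit_tensor_self:
  assumes j: "length j = d" and triv: "chi_trivial_on_stab j"
  shows "orbit_coord j (unit_tensor j) = 1"
proof -
  have "id \<in> W_stab j" using j by (simp add: W_stab_def)
  moreover have "finite (W_stab j)" using finite_W by (simp add: W_stab_def)
  ultimately have "card (W_stab j) \<noteq> 0" using card_0_eq by blast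
  moreover have "(\<Sum>\<tau>\<in>W. inverse (\<chi> \<tau>) * unit_tensor j (perm_act d \<tau> j)) = (\<Sum>\<tau>\<in>W_stab j. 1)"
    using triv finite_W unfolding W_stab_def chi_trivial_on_stab_def unit_tensor_def
    by (simp add: sum.inter_filter[symmetric] if_distrib cong: if_cong)
  ultimately show ?thesis by (simp add: orbit_coord_def)
qed

lemma orbit_coord_unit_tensor_Jset:
  assumes "j \<in> Jset d W \<chi> L" and "k \<in> Jset d W \<chi> L"
  shows "orbit_coord j (unit_tensor k) = (if j = k then 1 else 0)"
proof (cases "j = k")
  case True
  have "chi_trivial_on_stab j" using assms(1) by (simp add: Jset_iff)
  then show ?thesis
    using True orbit_coord_unit_tensor_self[OF length_Jset[OF assms(1)]] by simp
next
  case False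
  then have "k \<notin> W_orbit j" using Jset_eq_if_W_orbit[OF assms] by blast
  then show ?thesis using False by (simp add: orbit_coord_unit_tensor_notin)
qed

lemma unit_tensor_decompose_orbit_min:
  assumes j: "j \<in> tuples {0..n} d" and min: "orbit_min j = j"
  shows "(\<lambda>k. unit_tensor j k - (\<Sum>i\<in>Jset d W \<chi> {0..n}. orbit_coord i (unit_tensor j) * unit_tensor i k))
    \<in> chi_sub n d W \<chi>"
proof (cases "chi_trivial_on_stab j")
  case True
  then have jJ: "j \<in> Jset d W \<chi> {0..n}" using j min by (simp add: Jset_iff)
  have "(\<Sum>i\<in>Jset d W \<chi> {0..n}. orbit_coord i (unit_tensor j) * unit_tensor i k)
      = (\<Sum>i\<in>Jset d W \<chi> {0..n}. if i = j then unit_tensor j k else 0)" for k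
    by (rule sum.cong) (simp_all add: orbit_coord_unit_tensor_Jset[OF _ jJ])
  then have "(\<Sum>i\<in>Jset d W \<chi> {0..n}. orbit_coord i (unit_tensor j) * unit_tensor i k) = unit_tensor j k" for k
    using jJ finite_Jset[of "{0..n}"] by simp
  then show ?thesis using lin_span_zero unfolding chi_sub_def by simp
next
  case False
  then have jU: "unit_tensor j \<in> chi_sub n d W \<chi>" using unit_tensor_in_chi_sub[OF j] by simp
  have "orbit_coord i (unit_tensor j) = 0" if "i \<in> Jset d W \<chi> {0..n}" for i
    using orbit_coord_chi_sub[OF length_Jset[OF that] jU] .
  then show ?thesis using jU by simp
qed

lemma unit_tensor_decompose:
  assumes k0: "k0 \<in> tuples {0..n} d"
  shows "(\<lambda>k. unit_tensor k0 k - (\<Sum>i\<in>Jset d W \<chi> {0..n}. orbit_coord i (unit_tensor k0) * unit_tensor i k))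
    \<in> chi_sub n d W \<chi>"
proof -
  define J where "J = Jset d W \<chi> {0..n}"
  have lk0: "length k0 = d" using k0 by (simp add: tuples_def)
  obtain \<sigma> where \<sigma>: "\<sigma> \<in> W" and j0: "orbit_min k0 = perm_act d \<sigma> k0"
    using orbit_min_in_W_orbit[OF lk0] by (auto simp: W_orbit_def)
  define j where "j = orbit_min k0"
  define c where "c = \<chi> \<sigma>"
  have j_T: "j \<in> tuples {0..n} d" using k0 j0 perm_act_in_tuples_iff[OF \<sigma> lk0] by (simp add: j_def)
  have "orbit_min j = j" using orbit_min_idem[OF lk0] by (simp add: j_def)
  then have dec_j: "(\<lambda>k. unit_tensor j k - (\<Sum>i\<in>J. orbit_coord i (unit_tensor j) * unit_tensor i k))
      \<in> chi_sub n d W \<chi>"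
    unfolding J_def by (rule unit_tensor_decompose_orbit_min[OF j_T])
  have congr: "(\<lambda>k. inverse c * unit_tensor k0 k - unit_tensor j k) \<in> chi_sub n d W \<chi>"
    using unit_tensor_perm_act_congr[OF \<sigma> k0] j0 by (simp add: j_def c_def)
  have coord: "orbit_coord i (unit_tensor k0) = c * orbit_coord i (unit_tensor j)" if "i \<in> J" for i
  proof -
    have "0 = orbit_coord i (\<lambda>k. inverse c * unit_tensor k0 k + (- 1) * unit_tensor j k)"
      using orbit_coord_chi_sub[OF length_Jset congr] that by (simp add: J_def)
    then have "inverse c * orbit_coord i (unit_tensor k0) = orbit_coord i (unit_tensor j)"
      by (simp only: orbit_coord_add orbit_coord_scale) simp
    then show ?thesis
      using chi_nonzero[OF \<sigma>] by (auto simp: c_def field_simps)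
  qed
  have "(\<lambda>k. unit_tensor k0 k - (\<Sum>i\<in>J. orbit_coord i (unit_tensor k0) * unit_tensor i k)) =
      (\<lambda>k. c * (unit_tensor j k - (\<Sum>i\<in>J. orbit_coord i (unit_tensor j) * unit_tensor i k))
         + c * (inverse c * unit_tensor k0 k - unit_tensor j k))"
    using chi_nonzero[OF \<sigma>]
    by (simp add: fun_eq_iff coord sum_distrib_left algebra_simps c_def cong: sum.cong)
  also have "\<dots> \<in> chi_sub n d W \<chi>"
    using dec_j congr unfolding chi_sub_def by (intro lin_span_add lin_span_scale)
  finally show ?thesis unfolding J_def .
qed

lemma tensor_decompose:
  assumes z: "z \<in> tensor_space n d"
  shows "(\<lambda>k. z k - (\<Sum>i\<in>Jset d W \<chi> {0..n}. orbit_coord i z * unit_tensor i k)) \<in> chi_sub n d W \<chi>"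
proof -
  define T where "T = tuples {0..n} d"
  define J where "J = Jset d W \<chi> {0..n}"
  define r where "r k0 = (\<lambda>k. unit_tensor k0 k - (\<Sum>i\<in>J. orbit_coord i (unit_tensor k0) * unit_tensor i k))"
    for k0
  have z_eq: "z = (\<lambda>k. \<Sum>k0\<in>T. z k0 * unit_tensor k0 k)"
    unfolding T_def by (rule ext) (rule tensor_space_expand[OF z])
  have coord: "orbit_coord i z = (\<Sum>k0\<in>T. z k0 * orbit_coord i (unit_tensor k0))" for i
    using arg_cong[where f = "orbit_coord i", OF z_eq]
      linear_functional_sum[of "orbit_coord i", OF orbit_coord_add orbit_coord_scale] by simp
  have "(\<lambda>k. z k - (\<Sum>i\<in>J. orbit_coord i z * unit_tensor i k)) = (\<lambda>k. \<Sum>k0\<in>T. z k0 * r k0 k)"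
  proof
    fix k
    have "(\<Sum>i\<in>J. orbit_coord i z * unit_tensor i k)
        = (\<Sum>i\<in>J. \<Sum>k0\<in>T. z k0 * (orbit_coord i (unit_tensor k0) * unit_tensor i k))"
      unfolding coord by (simp add: sum_distrib_right mult.assoc)
    also have "\<dots> = (\<Sum>k0\<in>T. \<Sum>i\<in>J. z k0 * (orbit_coord i (unit_tensor k0) * unit_tensor i k))"
      by (rule sum.swap)
    finally show "z k - (\<Sum>i\<in>J. orbit_coord i z * unit_tensor i k) = (\<Sum>k0\<in>T. z k0 * r k0 k)"
      using fun_cong[OF z_eq, of k]
      by (simp add: r_def right_diff_distrib sum_subtractf sum_distrib_left)
  qed
  also have "\<dots> \<in> chi_sub n d W \<chi>"
    unfolding chi_sub_def
  proof (rule lin_span_sum)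
    show "finite T" by (simp add: T_def finite_tuples)
    show "r k0 \<in> lin_span {\<lambda>k. inverse (\<chi> \<sigma>) * z k - perm_tensor d \<sigma> z k | \<sigma> z.
        \<sigma> \<in> W \<and> z \<in> tensor_space n d}" if "k0 \<in> T" for k0
      using unit_tensor_decompose[of k0 n] that unfolding r_def J_def T_def chi_sub_def by simp
  qed
  finally show ?thesis unfolding J_def .
qed

lemma char_trace_eq_g_poly: "char_trace d W \<chi> n x = g_poly d W \<chi> n x"
proof -
  interpret quotient_dual_basis "tensor_space n d"
    "{\<lambda>k. inverse (\<chi> \<sigma>) * z k - perm_tensor d \<sigma> z k | \<sigma> z. \<sigma> \<in> W \<and> z \<in> tensor_space n d}"
    "tensor_map n d (diag_mat x)" "Jset d W \<chi> {0..n}" unit_tensor orbit_coord "monom d x"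
  proof
    show "finite (Jset d W \<chi> {0..n})" by (simp add: finite_Jset)
  qed (simp_all add: unit_tensor_in_tensor_space[OF Jset_in_tuples] tensor_map_in_tensor_space
      orbit_coord_add orbit_coord_scale orbit_coord_chi_sub[OF length_Jset, unfolded chi_sub_def]
      orbit_coord_unit_tensor_Jset tensor_decompose[unfolded chi_sub_def]
      orbit_coord_tensor_map_diag_mat[OF Jset_in_tuples])
  show ?thesis
    unfolding char_trace_def chi_sub_def quot_trace_eq by (simp add: g_poly_def monom_def)
qed

end

theorem lemma2p1p1:
  fixes d :: nat and W :: "(nat \<Rightarrow> nat) set" and \<chi> :: "(nat \<Rightarrow> nat) \<Rightarrow> 'a::field_char_0"
  assumes "is_perm_group d W" and "is_lin_char W \<chi>"
  shows "(\<forall>n. \<forall>\<pi>. \<pi> permutes {0..n} \<longrightarrow> (\<forall>x. g_poly d W \<chi> n (x \<circ> \<pi>) = g_poly d W \<chi> n x))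
       \<and> (\<forall>n x. g_spec d W \<chi> n x = g_poly d W \<chi> n x)
       \<and> (\<forall>n x. char_trace d W \<chi> n x = g_poly d W \<chi> n x)"
proof -
  interpret perm_group_char0 d W \<chi>
    using assms by unfold_locales
  show ?thesis
    using g_poly_permute g_spec_eq_g_poly char_trace_eq_g_poly by blast
qed

end
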